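(* Let $n\ge p$ and $l\ge 1$ be integers and let $\mathrm{St}(n,p,l)=\{\mathcal X\in\mathbb R^{n\times p\times l}:\mathcal X^\top*\mathcal X=\mathcal I\}$. Then $\mathrm{St}(n,p,l)$ is an embedded submanifold of $\mathbb R^{n\times p\times l}$ of dimension $$\dim \mathrm{St}(n,p,l)=p\Big(nl-\frac{pl}{2}-\frac{1}{2^{|\sin(l\pi/2)|}}\Big).$$
   Context: For $\mathcal A\in\mathbb R^{n\times p\times l}$, $A^{(i)}=\mathcal A(:,:,i)$ ($i=1,\dots,l$) are its frontal slices. $\operatorname{bcirc}(\mathcal A)\in\mathbb R^{nl\times pl}$ is the block circulant matrix whose $(i,j)$ block is $A^{(((i-j)\bmod l)+1)}$; $\operatorname{unfold}(\mathcal A)\in\mathbb R^{nl\times p}$ stacks $A^{(1)},\dots,A^{(l)}$ vertically and $\operatorname{fold}$ is its inverse. The t-product of $\mathcal A\in\mathbb R^{n\times p\times l}$ and $\mathcal B\in\mathbb R^{p\times m\times l}$ is $\mathcal A*\mathcal B=\operatorname{fold}(\operatorname{bcirc}(\mathcal A)\operatorname{unfold}(\mathcal B))\in\mathbb R^{n\times m\times l}$. The transpose $\mathcal A^\top\in\mathbb R^{p\times n\times l}$ has frontal slices $(A^{(1)})^\top,(A^{(l)})^\top,(A^{(l-1)})^\top,\dots,(A^{(2)})^\top$ (in this order). The identity tensor $\mathcal I\in\mathbb R^{p\times p\times l}$ has first frontal slice $I_p$ and all other frontal slices zero. *)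

theory Defs
  imports "HOL-Analysis.Analysis"
begin

fun Ck_on :: "nat \<Rightarrow> 'a::euclidean_space set \<Rightarrow> ('a \<Rightarrow> 'b::euclidean_space) \<Rightarrow> bool" where
  "Ck_on 0 U f = continuous_on U f"
| "Ck_on (Suc k) U f =
     (\<exists>f'. (\<forall>x\<in>U. (f has_derivative f' x) (at x)) \<and> (\<forall>v\<in>Basis. Ck_on k U (\<lambda>x. f' x v)))"

definition smooth_on :: "'a::euclidean_space set \<Rightarrow> ('a \<Rightarrow> 'b::euclidean_space) \<Rightarrow> bool" where
  "smooth_on U f \<longleftrightarrow> (\<forall>k. Ck_on k U f)"

definition embedded_submanifold :: "'a::euclidean_space set \<Rightarrow> nat \<Rightarrow> bool" where
  "embedded_submanifold S d \<longleftrightarrow>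
     (\<forall>x\<in>S. \<exists>U V (\<phi>::'a \<Rightarrow> 'a) \<psi> E.
        open U \<and> x \<in> U \<and> open V \<and> subspace E \<and> dim E = d \<and>
        smooth_on U \<phi> \<and> smooth_on V \<psi> \<and> \<phi> ` U = V \<and>
        (\<forall>y\<in>U. \<psi> (\<phi> y) = y) \<and> (\<forall>z\<in>V. \<phi> (\<psi> z) = z) \<and>
        \<phi> ` (S \<inter> U) = V \<inter> E)"

text \<open>A tensor in R^(n x p x l) is a vector indexed by 'n x 'p x 'l, where
  n = CARD('n), p = CARD('p), l = CARD('l).  The frontal slices are ordered by the
  canonical enumeration of 'l: the (i+1)-th frontal slice (0-based i < l) is the one
  with third index slice_idx i.\<close>

definition slice_idx :: "nat \<Rightarrow> 'l::enum" where
  "slice_idx i = (Enum.enum :: 'l list) ! i"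

definition slice_pos :: "'l::enum \<Rightarrow> nat" where
  "slice_pos k = (THE i. i < CARD('l) \<and> slice_idx i = k)"

type_synonym ('n, 'p, 'l) tensor = "real ^ ('n \<times> 'p \<times> 'l)"

text \<open>t-product: the i-th frontal slice of A * B is block row i of bcirc(A) times unfold(B),
  i.e. sum over j of A^(((i-j) mod l)+1) B^(j) (here 0-based).\<close>
definition tprod :: "('n::finite, 'p::finite, 'l::enum) tensor \<Rightarrow> ('p, 'm::finite, 'l) tensor
                      \<Rightarrow> ('n, 'm, 'l) tensor" where
  "tprod A B = (\<chi> x. case x of (a, b, k) \<Rightarrow>
     (\<Sum>j<CARD('l). \<Sum>c\<in>UNIV.
        A $ (a, c, slice_idx ((slice_pos k + CARD('l) - j) mod CARD('l))) * B $ (c, b, slice_idx j)))"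

text \<open>Transpose: slices (A^(1))^T, (A^(l))^T, ..., (A^(2))^T, i.e. slice i (0-based)
  is the transpose of slice (l - i) mod l.\<close>
definition ttrans :: "('n::finite, 'p::finite, 'l::enum) tensor \<Rightarrow> ('p, 'n, 'l) tensor" where
  "ttrans A = (\<chi> x. case x of (b, a, k) \<Rightarrow>
     A $ (a, b, slice_idx ((CARD('l) - slice_pos k) mod CARD('l))))"

definition tident :: "('p::finite, 'p, 'l::enum) tensor" where
  "tident = (\<chi> x. case x of (a, b, k) \<Rightarrow> (if slice_pos k = 0 \<and> a = b then 1 else 0))"

definition tStiefel :: "('n::finite, 'p::finite, 'l::enum) tensor set" where
  "tStiefel = {X. tprod (ttrans X) X = tident}"

end

theory Submission
  imports Defs
begin

(* The t-Stiefel set is the level set F X = I of the quadratic map F X = X^T * X.  At a point X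
   of the level set the differential h |-> h^T * X + X^T * h of F maps onto the space W of
   symmetric tensors (take h = X * C / 2), and every value F Y - I is symmetric.

   In general, let F be quadratic and W a subspace containing every F y - c that is the image of
   the differential of F at each point of the level set F y = c.  For x0 on the level set, let D
   be the differential at x0 and P a linear projection onto ker D.  The map
   y |-> P (y - x0) + D^* (F y - c) has injective derivative at x0, and it sends y into ker D
   iff F y = c, because D D^* is injective on W = range D.  The smooth inverse function theorem
   turns it into a slice chart, so the level set is a submanifold of dimension N - dim W.

   W is the fixed space of the coordinate involution (a, b, k) |-> (b, a, -k mod l), and the
   fixed space of an involution of N coordinates with f fixed points has dimension (N + f) / 2.
   Here f = p or 2 p according as l is odd or even, which is what 1 / 2^|sin(l pi/2)| encodes. *)

section \<open>Smooth maps\<close>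

lemma Ck_on_SucI:
  assumes "\<And>x. x \<in> U \<Longrightarrow> (f has_derivative f' x) (at x)"
    and "\<And>v. v \<in> Basis \<Longrightarrow> Ck_on k U (\<lambda>x. f' x v)"
  shows "Ck_on (Suc k) U f"
  using assms by auto

lemma Ck_on_subset: "Ck_on k U f \<Longrightarrow> V \<subseteq> U \<Longrightarrow> Ck_on k V f"
proof (induction k arbitrary: f)
  case 0 then show ?case by (auto intro: continuous_on_subset)
next
  case (Suc k) then show ?case by (auto 4 3)
qed

lemma Ck_on_SucD: "Ck_on (Suc k) U f \<Longrightarrow> Ck_on k U f"
proof (induction k arbitrary: f)
  case 0
  then show ?case
    by (auto intro!: continuous_at_imp_continuous_on dest: has_derivative_continuous)
next
  case (Suc k)
  then show ?case by (metis Ck_on.simps(2))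
qed

lemma Ck_on_cong:
  assumes "open U" "\<And>x. x \<in> U \<Longrightarrow> f x = g x"
  shows "Ck_on k U f \<Longrightarrow> Ck_on k U g"
proof (cases k)
  case 0 then show "Ck_on k U f \<Longrightarrow> Ck_on k U g" using assms continuous_on_cong by force
next
  case (Suc j)
  assume "Ck_on k U f"
  then obtain f' where d: "\<forall>x\<in>U. (f has_derivative f' x) (at x)"
    and c: "\<forall>v\<in>Basis. Ck_on j U (\<lambda>x. f' x v)" using Suc by auto
  have "(g has_derivative f' x) (at x)" if "x \<in> U" for x
    using d assms that by (metis has_derivative_transform_within_open)
  then show ?thesis unfolding Suc using c by (intro Ck_on_SucI) auto
qed

lemma Ck_on_const: "Ck_on k U (\<lambda>x. c)"
proof (induction k arbitrary: c)
  case 0 then show ?case by simp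
next
  case (Suc k) then show ?case by (intro Ck_on_SucI[where f'="\<lambda>x h. 0"]) auto
qed

lemma Ck_on_linear:
  fixes L :: "'a::euclidean_space \<Rightarrow> 'b::euclidean_space"
  assumes "linear L"
  shows "Ck_on k U L"
proof (cases k)
  case 0 then show ?thesis using assms linear_continuous_on linear_conv_bounded_linear by auto
next
  case (Suc j)
  have "bounded_linear L" using assms linear_conv_bounded_linear by blast
  then show ?thesis unfolding Suc
    by (intro Ck_on_SucI[where f'="\<lambda>x. L"] Ck_on_const bounded_linear_imp_has_derivative)
qed

lemma Ck_on_linear_comp:
  fixes L :: "'b::euclidean_space \<Rightarrow> 'c::euclidean_space"
  assumes "linear L"
  shows "Ck_on k U f \<Longrightarrow> Ck_on k U (\<lambda>x. L (f x))"
proof (induction k arbitrary: f)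
  case 0
  have "bounded_linear L" using assms linear_conv_bounded_linear by blast
  then show ?case using 0 by (auto intro: bounded_linear.continuous_on)
next
  case (Suc k)
  from Suc.prems obtain f' where d: "\<forall>x\<in>U. (f has_derivative f' x) (at x)"
    and c: "\<forall>v\<in>Basis. Ck_on k U (\<lambda>x. f' x v)" by auto
  have "bounded_linear L" using assms linear_conv_bounded_linear by blast
  show ?case
  proof (rule Ck_on_SucI)
    show "((\<lambda>x. L (f x)) has_derivative (\<lambda>h. L (f' x h))) (at x)" if "x \<in> U" for x
      using d that \<open>bounded_linear L\<close> by (auto intro: bounded_linear.has_derivative)
    show "Ck_on k U (\<lambda>x. L (f' x v))" if "v \<in> Basis" for v
      using c that by (intro Suc.IH) blast
  qed
qed

lemma Ck_on_add: "Ck_on k U f \<Longrightarrow> Ck_on k U g \<Longrightarrow> Ck_on k U (\<lambda>x. f x + g x)"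
proof (induction k arbitrary: f g)
  case 0 then show ?case by (auto intro: continuous_on_add)
next
  case (Suc k)
  from Suc.prems obtain f' g' where
    "\<forall>x\<in>U. (f has_derivative f' x) (at x)" "\<forall>v\<in>Basis. Ck_on k U (\<lambda>x. f' x v)"
    "\<forall>x\<in>U. (g has_derivative g' x) (at x)" "\<forall>v\<in>Basis. Ck_on k U (\<lambda>x. g' x v)"
    by auto
  then show ?case
    by (intro Ck_on_SucI[where f'="\<lambda>x h. f' x h + g' x h"] Suc.IH has_derivative_add) auto
qed

lemma Ck_on_diff: "Ck_on k U f \<Longrightarrow> Ck_on k U g \<Longrightarrow> Ck_on k U (\<lambda>x. f x - g x)"
  using Ck_on_add[OF _ Ck_on_linear_comp[OF linear_uminus, of k U g]] by simp

lemma Ck_on_sum: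
  "finite S \<Longrightarrow> (\<And>i. i \<in> S \<Longrightarrow> Ck_on k U (f i)) \<Longrightarrow> Ck_on k U (\<lambda>x. \<Sum>i\<in>S. f i x)"
  by (induction S rule: finite_induct) (simp_all add: Ck_on_const Ck_on_add)

lemma Ck_on_mult:
  fixes f g :: "'a::euclidean_space \<Rightarrow> real"
  shows "Ck_on k U f \<Longrightarrow> Ck_on k U g \<Longrightarrow> Ck_on k U (\<lambda>x. f x * g x)"
proof (induction k arbitrary: f g)
  case 0 then show ?case by (auto intro: continuous_on_mult)
next
  case (Suc k)
  from Suc.prems obtain f' g' where
    "\<forall>x\<in>U. (f has_derivative f' x) (at x)" "\<forall>v\<in>Basis. Ck_on k U (\<lambda>x. f' x v)"
    "\<forall>x\<in>U. (g has_derivative g' x) (at x)" "\<forall>v\<in>Basis. Ck_on k U (\<lambda>x. g' x v)"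
    by auto
  moreover have "Ck_on k U f" "Ck_on k U g" using Suc.prems Ck_on_SucD by blast+
  ultimately show ?case
    by (intro Ck_on_SucI[where f'="\<lambda>x h. f x * g' x h + f' x h * g x"] Ck_on_add Suc.IH
        has_derivative_mult) auto
qed

lemma Ck_on_prod:
  fixes f :: "'i \<Rightarrow> 'a::euclidean_space \<Rightarrow> real"
  shows "finite S \<Longrightarrow> (\<And>i. i \<in> S \<Longrightarrow> Ck_on k U (f i)) \<Longrightarrow> Ck_on k U (\<lambda>x. \<Prod>i\<in>S. f i x)"
  by (induction S rule: finite_induct) (simp_all add: Ck_on_const Ck_on_mult)

lemma Ck_on_inverse:
  fixes f :: "'a::euclidean_space \<Rightarrow> real"
  shows "Ck_on k U f \<Longrightarrow> (\<forall>x\<in>U. f x \<noteq> 0) \<Longrightarrow> Ck_on k U (\<lambda>x. inverse (f x))"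
proof (induction k arbitrary: f)
  case 0 then show ?case by (auto intro: continuous_on_inverse)
next
  case (Suc k)
  from Suc.prems obtain f' where
    d: "\<forall>x\<in>U. (f has_derivative f' x) (at x)" and c: "\<forall>v\<in>Basis. Ck_on k U (\<lambda>x. f' x v)"
    by auto
  have "Ck_on k U (\<lambda>x. inverse (f x))" using Suc.IH Suc.prems Ck_on_SucD by blast
  show ?case
  proof (rule Ck_on_SucI)
    show "((\<lambda>x. inverse (f x)) has_derivative (\<lambda>h. - (inverse (f x) * f' x h * inverse (f x))))
        (at x)" if "x \<in> U" for x
      using Deriv.has_derivative_inverse[OF _ d[rule_format, OF that]] Suc.prems(2) that by blast
    show "Ck_on k U (\<lambda>x. - (inverse (f x) * f' x v * inverse (f x)))" if "v \<in> Basis" for v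
      using c that \<open>Ck_on k U (\<lambda>x. inverse (f x))\<close>
      by (intro Ck_on_linear_comp[OF linear_uminus, of k U] Ck_on_mult) auto
  qed
qed

lemma Ck_on_divide:
  fixes f g :: "'a::euclidean_space \<Rightarrow> real"
  shows "Ck_on k U f \<Longrightarrow> Ck_on k U g \<Longrightarrow> (\<forall>x\<in>U. g x \<noteq> 0) \<Longrightarrow> Ck_on k U (\<lambda>x. f x / g x)"
  unfolding divide_inverse by (intro Ck_on_mult Ck_on_inverse)

lemma Ck_on_componentwise:
  fixes f :: "'a::euclidean_space \<Rightarrow> 'b::euclidean_space"
  shows "(\<forall>b\<in>Basis. Ck_on k U (\<lambda>x. f x \<bullet> b)) \<Longrightarrow> Ck_on k U f"
proof (induction k arbitrary: f)
  case 0 then show ?case unfolding Ck_on.simps by (subst continuous_on_componentwise) simp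
next
  case (Suc k)
  have "\<forall>b\<in>Basis. \<exists>F'. (\<forall>x\<in>U. ((\<lambda>x. f x \<bullet> b) has_derivative F' x) (at x)) \<and>
      (\<forall>v\<in>Basis. Ck_on k U (\<lambda>x. F' x v))"
    using Suc.prems by (simp only: Ck_on.simps)
  then obtain F' where "\<forall>b\<in>Basis. (\<forall>x\<in>U. ((\<lambda>x. f x \<bullet> b) has_derivative F' b x) (at x)) \<and>
      (\<forall>v\<in>Basis. Ck_on k U (\<lambda>x. F' b x v))"
    by (rule bchoice[THEN exE])
  then have F': "\<And>b x. b \<in> Basis \<Longrightarrow> x \<in> U \<Longrightarrow> ((\<lambda>x. f x \<bullet> b) has_derivative F' b x) (at x)"
      "\<And>b v. b \<in> Basis \<Longrightarrow> v \<in> Basis \<Longrightarrow> Ck_on k U (\<lambda>x. F' b x v)"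
    by blast+
  define f' where "f' x h = (\<Sum>b\<in>Basis. F' b x h *\<^sub>R b)" for x h
  have comp: "f' x h \<bullet> b = F' b x h" if "b \<in> Basis" for x h b
    using that by (simp add: f'_def inner_sum_left inner_Basis if_distrib cong: if_cong)
  show ?case
  proof (rule Ck_on_SucI)
    show "(f has_derivative f' x) (at x)" if "x \<in> U" for x
      using F'(1) that by (subst has_derivative_componentwise_within) (simp add: comp)
    show "Ck_on k U (\<lambda>x. f' x v)" if "v \<in> Basis" for v
      using F'(2) that by (intro Suc.IH) (simp add: comp)
  qed
qed

lemma Ck_on_inner: "Ck_on k U f \<Longrightarrow> Ck_on k U (\<lambda>x. f x \<bullet> b)"
  by (rule Ck_on_linear_comp) (auto simp: linear_iff inner_add_left)

lemma Ck_on_vec: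
  fixes f :: "'a::euclidean_space \<Rightarrow> real^'m"
  shows "(\<And>i. Ck_on k U (\<lambda>x. f x $ i)) \<Longrightarrow> Ck_on k U f"
  by (rule Ck_on_componentwise) (auto simp: Basis_vec_def inner_axis)

lemma Ck_on_vec_nth:
  fixes f :: "'a::euclidean_space \<Rightarrow> real^'m"
  shows "Ck_on k U f \<Longrightarrow> Ck_on k U (\<lambda>x. f x $ i)"
  using Ck_on_inner[of k U f "axis i 1"] by (simp add: inner_axis)

lemma Ck_on_det:
  fixes A :: "'a::euclidean_space \<Rightarrow> real^'m^'m"
  assumes "\<And>i j. Ck_on k U (\<lambda>x. A x $ i $ j)"
  shows "Ck_on k U (\<lambda>x. det (A x))"
  unfolding det_def
  by (intro Ck_on_sum Ck_on_mult Ck_on_const Ck_on_prod finite_permutations assms) auto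

lemma Ck_on_cramer:
  fixes A :: "'a::euclidean_space \<Rightarrow> real^'m^'m"
  assumes "\<And>i j. Ck_on k U (\<lambda>x. A x $ i $ j)" and "\<forall>x\<in>U. det (A x) \<noteq> 0"
  shows "Ck_on k U (\<lambda>x. \<chi> j. det (\<chi> i j'. if j' = j then b $ i else A x $ i $ j') / det (A x))"
proof (rule Ck_on_vec)
  fix j
  have "Ck_on k U (\<lambda>x. (\<chi> i j'. if j' = j then b $ i else A x $ i $ j') $ i $ j')" for i j'
    by (cases "j' = j") (auto simp: Ck_on_const assms)
  from Ck_on_divide[OF Ck_on_det[OF this] Ck_on_det[OF assms(1)] assms(2)]
  show "Ck_on k U (\<lambda>x. (\<chi> j. det (\<chi> i j'. if j' = j then b $ i else A x $ i $ j') / det (A x)) $ j)"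
    by simp
qed

lemma Ck_on_quad:
  assumes "bilinear B"
  shows "Ck_on k U (\<lambda>y. B y y)"
proof -
  have der: "((\<lambda>y. B y y) has_derivative (\<lambda>h. B y h + B h y)) (at y)" for y
    using bounded_bilinear.FDERIV[OF bilinear_conv_bounded_bilinear[THEN iffD1, OF assms]
        has_derivative_ident has_derivative_ident] by simp
  show ?thesis
  proof (cases k)
    case 0 then show ?thesis using der
      by (auto intro!: continuous_at_imp_continuous_on dest: has_derivative_continuous)
  next
    case (Suc j)
    have "linear (\<lambda>y. B y v + B v y)" for v
      using assms unfolding bilinear_def by (intro linear_compose_add) auto
    then show ?thesis unfolding Suc by (intro Ck_on_SucI[OF der] Ck_on_linear)
  qed
qed

lemma smooth_on_subset: "smooth_on U f \<Longrightarrow> V \<subseteq> U \<Longrightarrow> smooth_on V f"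
  unfolding smooth_on_def by (auto intro: Ck_on_subset)

lemma smooth_on_derivative:
  assumes "smooth_on U f" "open U" "\<And>x. x \<in> U \<Longrightarrow> (f has_derivative f' x) (at x)" "v \<in> Basis"
  shows "smooth_on U (\<lambda>x. f' x v)"
  unfolding smooth_on_def
proof
  fix k
  have "Ck_on (Suc k) U f" using assms(1) unfolding smooth_on_def ..
  then obtain F where F: "\<forall>x\<in>U. (f has_derivative F x) (at x)" "\<forall>v\<in>Basis. Ck_on k U (\<lambda>x. F x v)"
    unfolding Ck_on.simps(2) by blast
  have "F x v = f' x v" if "x \<in> U" for x
    using has_derivative_unique[OF F(1)[rule_format, OF that] assms(3)[OF that]] by simp
  then show "Ck_on k U (\<lambda>x. f' x v)"
    using Ck_on_cong[OF assms(2), of "\<lambda>x. F x v" "\<lambda>x. f' x v"] F(2) assms(4) by simp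
qed

lemma Ck_on_compose:
  fixes f :: "'b::euclidean_space \<Rightarrow> 'c::euclidean_space"
    and g :: "'a::euclidean_space \<Rightarrow> 'b"
  assumes "smooth_on UNIV f" "Ck_on k V g"
  shows "Ck_on k V (\<lambda>x. f (g x))"
  using assms
proof (induction k arbitrary: f)
  case 0
  have "continuous_on UNIV f" using "0.prems"(1) by (simp add: smooth_on_def flip: Ck_on.simps(1))
  then show ?case using "0.prems"(2) by (auto intro: continuous_on_compose2)
next
  case (Suc k)
  obtain g' where g': "\<forall>x\<in>V. (g has_derivative g' x) (at x)" "\<forall>v\<in>Basis. Ck_on k V (\<lambda>x. g' x v)"
    using Suc.prems(2) by auto
  have "Ck_on (Suc 0) UNIV f" using Suc.prems(1) by (simp only: smooth_on_def)
  then obtain f' where f': "\<And>y. (f has_derivative f' y) (at y)" by auto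
  have f'_smooth: "smooth_on UNIV (\<lambda>y. f' y b)" if "b \<in> Basis" for b
    using smooth_on_derivative[OF Suc.prems(1) open_UNIV] f' that by blast
  have gk: "Ck_on k V g" using Suc.prems(2) Ck_on_SucD by blast
  have expand: "f' (g x) (g' x v) \<bullet> i = (\<Sum>b\<in>Basis. (g' x v \<bullet> b) * (f' (g x) b \<bullet> i))" for x v i
  proof -
    interpret linear "f' (g x)" using f' has_derivative_linear by blast
    have "f' (g x) (g' x v) = f' (g x) (\<Sum>b\<in>Basis. (g' x v \<bullet> b) *\<^sub>R b)"
      by (simp only: euclidean_representation)
    also have "\<dots> = (\<Sum>b\<in>Basis. (g' x v \<bullet> b) *\<^sub>R f' (g x) b)"
      by (simp add: sum scale)
    finally show ?thesis by (simp add: inner_sum_left)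
  qed
  have "Ck_on k V (\<lambda>x. f' (g x) (g' x v))" if v: "v \<in> Basis" for v
  proof (rule Ck_on_componentwise, intro ballI)
    fix i :: 'c assume "i \<in> Basis"
    show "Ck_on k V (\<lambda>x. f' (g x) (g' x v) \<bullet> i)"
      unfolding expand using g'(2) v f'_smooth gk
      by (intro Ck_on_sum Ck_on_mult Ck_on_inner Suc.IH) auto
  qed
  moreover have "((\<lambda>x. f (g x)) has_derivative (\<lambda>h. f' (g x) (g' x h))) (at x)" if "x \<in> V" for x
    using diff_chain_at[OF g'(1)[rule_format, OF that] f'] by (simp add: o_def)
  ultimately show ?case by (rule Ck_on_SucI[rotated])
qed

text \<open>By Cramer's rule the derivative inv (\<phi>' (g y)) of g has entries that are rational in
  the entries of \<phi>' (g y), so g being C^k makes its derivative C^k as well.\<close>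

lemma smooth_on_inverse_map:
  fixes \<phi> g :: "real^'m \<Rightarrow> real^'m"
  assumes \<phi>: "smooth_on UNIV \<phi>" and der: "\<And>x. (\<phi> has_derivative \<phi>' x) (at x)"
    and "open V" and "continuous_on V g"
    and der_g: "\<And>y. y \<in> V \<Longrightarrow> (g has_derivative inv (\<phi>' (g y))) (at y)"
    and bij: "\<And>y. y \<in> V \<Longrightarrow> bij (\<phi>' (g y))"
  shows "smooth_on V g"
  unfolding smooth_on_def
proof
  fix k show "Ck_on k V g"
  proof (induction k)
    case 0 then show ?case using \<open>continuous_on V g\<close> by simp
  next
    case (Suc k)
    define A where "A y = matrix (\<phi>' (g y))" for y
    have lin: "linear (\<phi>' x)" for x using der has_derivative_linear by blast
    have entries: "Ck_on k V (\<lambda>y. A y $ i $ j)" for i j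
    proof -
      have "smooth_on UNIV (\<lambda>x. \<phi>' x (axis j 1))"
        by (rule smooth_on_derivative[OF \<phi> open_UNIV der]) simp
      from Ck_on_compose[OF this Suc.IH] have "Ck_on k V (\<lambda>y. \<phi>' (g y) (axis j 1))" .
      then show ?thesis using Ck_on_vec_nth by (simp add: A_def matrix_def)
    qed
    have det_nz: "\<forall>y\<in>V. det (A y) \<noteq> 0"
      using det_nz_iff_inj[OF lin] bij bij_is_inj A_def by metis
    have cramer_inv: "(\<chi> j. det (\<chi> i j'. if j' = j then v $ i else A y $ i $ j') / det (A y))
        = inv (\<phi>' (g y)) v" if "y \<in> V" for y v
    proof -
      have "\<phi>' (g y) (inv (\<phi>' (g y)) v) = v"
        using bij[OF that] by (simp add: bij_is_surj surj_f_inv_f)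
      then have "A y *v inv (\<phi>' (g y)) v = v"
        unfolding A_def using matrix_works lin linear_matrix_vector_mul_eq by metis
      then show ?thesis using cramer[of "A y"] det_nz that by simp
    qed
    have "Ck_on k V (\<lambda>y. inv (\<phi>' (g y)) v)" for v
      using Ck_on_cong[OF \<open>open V\<close> cramer_inv Ck_on_cramer[OF entries det_nz]] by simp
    then show ?case
      using der_g by (rule Ck_on_SucI[rotated])
  qed
qed

lemma smooth_inverse_function_theorem:
  fixes \<phi> :: "real^'m \<Rightarrow> real^'m"
  assumes \<phi>: "smooth_on UNIV \<phi>" and der: "\<And>x. (\<phi> has_derivative \<phi>' x) (at x)"
    and inj: "inj (\<phi>' x0)"
  obtains U V g where "open U" "x0 \<in> U" "open V" "\<phi> ` U = V"
    "\<And>x. x \<in> U \<Longrightarrow> g (\<phi> x) = x" "\<And>y. y \<in> V \<Longrightarrow> \<phi> (g y) = y" "smooth_on V g"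
proof -
  have bl: "bounded_linear (\<phi>' x)" for x using der has_derivative_bounded_linear by blast
  define f' where "f' x = Blinfun (\<phi>' x)" for x
  have f'_apply: "blinfun_apply (f' x) = \<phi>' x" for x
    by (simp add: f'_def bounded_linear_Blinfun_apply[OF bl])
  have "continuous_on UNIV f'"
  proof (rule continuous_on_blinfun_componentwise)
    fix i :: "real^'m" assume "i \<in> Basis"
    have "smooth_on UNIV (\<lambda>x. \<phi>' x i)"
      by (rule smooth_on_derivative[OF \<phi> open_UNIV der \<open>i \<in> Basis\<close>])
    then have "Ck_on 0 UNIV (\<lambda>x. \<phi>' x i)" unfolding smooth_on_def by (rule spec)
    then show "continuous_on UNIV (\<lambda>x. blinfun_apply (f' x) i)" by (simp add: f'_apply)
  qed
  obtain fi where fi: "linear fi" "\<And>x. fi (\<phi>' x0 x) = x"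
    using linear_injective_isomorphism[OF has_derivative_linear[OF der] inj] by auto
  have bl_fi: "bounded_linear fi" using fi(1) linear_conv_bounded_linear by blast
  have inv_f': "Blinfun fi o\<^sub>L f' x0 = id_blinfun"
    by (rule blinfun_eqI) (simp add: bounded_linear_Blinfun_apply[OF bl_fi] f'_apply fi(2))
  obtain U V g g' where "open U" "x0 \<in> U" "open V" and hom: "homeomorphism U V \<phi> g"
    and der_g: "\<And>y. y \<in> V \<Longrightarrow> (g has_derivative g' y) (at y)"
    and g': "\<And>y. y \<in> V \<Longrightarrow> g' y = inv (\<phi>' (g y))"
    and bij: "\<And>y. y \<in> V \<Longrightarrow> bij (\<phi>' (g y))"
    by (rule inverse_function_theorem[of UNIV \<phi> f' x0 "Blinfun fi"])
      (simp_all add: der f'_apply \<open>continuous_on UNIV f'\<close> inv_f')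
  have "smooth_on V g"
  proof (rule smooth_on_inverse_map[OF \<phi> der \<open>open V\<close>])
    show "continuous_on V g" using hom by (simp add: homeomorphism_def)
    show "(g has_derivative inv (\<phi>' (g y))) (at y)" if "y \<in> V" for y
      using der_g[OF that] g'[OF that] by simp
  qed (rule bij)
  show ?thesis
    by (rule that[OF \<open>open U\<close> \<open>x0 \<in> U\<close> \<open>open V\<close> _ _ _ \<open>smooth_on V g\<close>])
      (use hom in \<open>simp_all add: homeomorphism_def\<close>)
qed

section \<open>Level sets of quadratic maps\<close>

lemma linear_projection_onto_subspace:
  fixes K :: "'a::euclidean_space set"
  assumes "subspace K"
  obtains P where "linear P" "\<And>v. P v \<in> K" "\<And>k. k \<in> K \<Longrightarrow> P k = k"
proof -
  obtain OB where OB: "OB \<subseteq> K" "pairwise orthogonal OB" "\<And>x. x \<in> OB \<Longrightarrow> norm x = 1"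
      "independent OB" "span OB = K"
    using orthonormal_basis_subspace[OF assms] by metis
  have "finite OB" using OB(4) independent_imp_finite by blast
  define P where "P v = (\<Sum>b\<in>OB. (v \<bullet> b) *\<^sub>R b)" for v
  have "linear P" unfolding P_def
    by (intro linear_compose_sum) (auto simp: linear_iff inner_add_left scaleR_add_left)
  moreover have "P v \<in> K" for v
    unfolding P_def OB(5)[symmetric] by (intro span_sum span_scale span_base)
  moreover have "P b = b" if "b \<in> OB" for b
  proof -
    have "(\<Sum>b'\<in>OB. (b \<bullet> b') *\<^sub>R b') = (\<Sum>b'\<in>OB. if b' = b then b else 0)"
      using OB(2,3) that
      by (intro sum.cong) (auto simp: pairwise_def orthogonal_def inner_commute dot_square_norm)
    then show ?thesis using that \<open>finite OB\<close> by (simp add: P_def)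
  qed
  then have "P k = k" if "k \<in> K" for k
    using linear_eq_on[OF \<open>linear P\<close> linear_id, of k OB] that OB(5) by auto
  ultimately show ?thesis using that by blast
qed

lemma dim_range_add_dim_kernel:
  fixes D :: "'a::euclidean_space \<Rightarrow> 'b::euclidean_space"
  assumes "linear D"
  shows "dim (range D) + dim {h. D h = 0} = DIM('a)"
proof -
  define K where "K = {h. D h = 0}"
  define Kp where "Kp = {y. \<forall>x\<in>K. orthogonal x y}"
  have "subspace K" unfolding K_def by (rule linear_subspace_kernel[OF assms])
  have "subspace Kp" unfolding Kp_def by (rule subspace_orthogonal_to_vectors)
  have "dim Kp + dim K = DIM('a)"
    using dim_subspace_orthogonal_to_vectors[OF \<open>subspace K\<close> subspace_UNIV] by (simp add: Kp_def)
  moreover have "range D = D ` Kp"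
  proof (intro subset_antisym subsetI)
    fix u assume "u \<in> range D"
    then obtain v where u: "u = D v" by auto
    obtain y z where yz: "y \<in> span K" "\<And>w. w \<in> span K \<Longrightarrow> orthogonal z w" "v = y + z"
      using orthogonal_subspace_decomp_exists[of K v] by blast
    have "y \<in> K" using yz(1) \<open>subspace K\<close> by (metis span_eq_iff)
    then have "D y = 0" by (simp add: K_def)
    then have "u = D z" using u yz(3) linear_add[OF assms] by simp
    moreover have "z \<in> Kp"
      using yz(2) span_base orthogonal_commute unfolding Kp_def by blast
    ultimately show "u \<in> D ` Kp" by blast
  qed auto
  moreover have "inj_on D (span Kp)"
  proof (rule inj_onI)
    fix a b assume ab: "a \<in> span Kp" "b \<in> span Kp" "D a = D b"
    have "a - b \<in> Kp" using ab \<open>subspace Kp\<close> span_eq_iff subspace_diff by blast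
    moreover have "a - b \<in> K" using ab(3) linear_diff[OF assms] by (simp add: K_def)
    ultimately have "(a - b) \<bullet> (a - b) = 0" unfolding Kp_def orthogonal_def by blast
    then show "a = b" by simp
  qed
  ultimately show ?thesis using dim_image_eq[OF assms] K_def by simp
qed

lemma in_range_kernel_adjoint_comp_eq_0:
  fixes D :: "'a::euclidean_space \<Rightarrow> 'b::euclidean_space"
  assumes "linear D" "w \<in> range D" "D (adjoint D w) = 0"
  shows "w = 0"
proof -
  have "adjoint D w \<bullet> adjoint D w = 0" using adjoint_works[OF assms(1)] assms(3) by simp
  then have "adjoint D w = 0" by simp
  obtain h where "w = D h" using assms(2) by blast
  then have "w \<bullet> w = h \<bullet> adjoint D w" using adjoint_works[OF assms(1)] by simp
  then show ?thesis using \<open>adjoint D w = 0\<close> by simp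
qed

lemma projection_add_adjoint_comp_inj:
  fixes D :: "'a::euclidean_space \<Rightarrow> 'b::euclidean_space"
  assumes "linear D" "linear P" "\<And>v. D (P v) = 0" "\<And>k. D k = 0 \<Longrightarrow> P k = k"
  shows "inj (\<lambda>v. P v + adjoint D (D v))"
proof -
  have lin: "linear (\<lambda>v. P v + adjoint D (D v))"
    using linear_compose_add[OF assms(2) linear_compose[OF assms(1) adjoint_linear[OF assms(1)]]]
    by (simp add: o_def)
  show ?thesis
    unfolding linear_inj_iff_eq_0[OF lin]
  proof (intro allI impI)
    fix v assume v: "P v + adjoint D (D v) = 0"
    have "D (P v + adjoint D (D v)) = 0" by (simp add: v linear_0[OF assms(1)])
    then have "D (adjoint D (D v)) = 0" by (simp add: linear_add[OF assms(1)] assms(3))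
    then have "D v = 0" using in_range_kernel_adjoint_comp_eq_0[OF assms(1)] by blast
    then show "v = 0" using v assms(4) by (simp add: linear_0[OF adjoint_linear[OF assms(1)]])
  qed
qed

lemma quadratic_map_has_derivative:
  fixes B :: "'a::euclidean_space \<Rightarrow> 'a \<Rightarrow> 'b::euclidean_space"
    and P :: "'a \<Rightarrow> 'c::euclidean_space" and L :: "'b \<Rightarrow> 'c"
  assumes "bilinear B" "linear P" "linear L"
  shows "((\<lambda>y. P (y - x0) + L (B y y - c)) has_derivative (\<lambda>h. P h + L (B y h + B h y))) (at y)"
proof -
  have bl: "bounded_linear P" "bounded_linear L"
    using assms(2,3) linear_conv_bounded_linear by blast+
  have "((\<lambda>y. B y y) has_derivative (\<lambda>h. B y h + B h y)) (at y)"
    using bounded_bilinear.FDERIV[OF bilinear_conv_bounded_bilinear[THEN iffD1, OF assms(1)]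
        has_derivative_ident has_derivative_ident] by simp
  then have "((\<lambda>y. P (y - x0) + L (B y y - c)) has_derivative
      (\<lambda>h. P (h - 0) + L (B y h + B h y - 0))) (at y)"
    by (intro has_derivative_add bounded_linear.has_derivative[OF bl(1)]
        bounded_linear.has_derivative[OF bl(2)] has_derivative_diff has_derivative_ident
        has_derivative_const)
  then show ?thesis by simp
qed

lemma quadratic_map_smooth:
  fixes B :: "'a::euclidean_space \<Rightarrow> 'a \<Rightarrow> 'b::euclidean_space"
    and P :: "'a \<Rightarrow> 'c::euclidean_space" and L :: "'b \<Rightarrow> 'c"
  assumes "bilinear B" "linear P" "linear L"
  shows "smooth_on UNIV (\<lambda>y. P (y - x0) + L (B y y - c))"
  unfolding smooth_on_def
proof (intro allI Ck_on_add)
  fix k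
  have "Ck_on k UNIV (\<lambda>y. y)" by (rule Ck_on_linear) (simp add: linear_iff)
  then show "Ck_on k UNIV (\<lambda>y. P (y - x0))"
    by (intro Ck_on_linear_comp[OF assms(2)] Ck_on_diff Ck_on_const)
  show "Ck_on k UNIV (\<lambda>y. L (B y y - c))"
    by (intro Ck_on_linear_comp[OF assms(3)] Ck_on_diff Ck_on_quad[OF assms(1)] Ck_on_const)
qed

lemma image_Int_eq_if_preimage:
  assumes "f ` U = V" "\<And>y. y \<in> U \<Longrightarrow> f y \<in> K \<longleftrightarrow> y \<in> S"
  shows "f ` (S \<inter> U) = V \<inter> K"
proof (intro subset_antisym subsetI)
  fix z assume "z \<in> f ` (S \<inter> U)"
  then obtain x where "x \<in> U" "x \<in> S" "z = f x" by blast
  then show "z \<in> V \<inter> K" using assms by blast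
next
  fix z assume z: "z \<in> V \<inter> K"
  then obtain x where x: "x \<in> U" "z = f x" using assms(1) by blast
  then have "x \<in> S" using z assms(2) by blast
  then show "z \<in> f ` (S \<inter> U)" using x by blast
qed

theorem embedded_submanifold_quadric_level_set:
  fixes B :: "real^'m \<Rightarrow> real^'m \<Rightarrow> real^'k" and c :: "real^'k"
  assumes bil: "bilinear B"
    and in_W: "\<And>y. B y y - c \<in> W"
    and range_diff: "\<And>x. B x x = c \<Longrightarrow> range (\<lambda>h. B h x + B x h) = W"
  shows "embedded_submanifold {x. B x x = c} (CARD('m) - dim W)"
  unfolding embedded_submanifold_def
proof
  fix x0 assume "x0 \<in> {x. B x x = c}"
  then have x0: "B x0 x0 = c" by simp
  have lin_l: "linear (\<lambda>x. B x y)" and lin_r: "linear (\<lambda>y. B x y)" for x y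
    using bil by (simp_all add: bilinear_def)
  define D where "D h = B h x0 + B x0 h" for h
  have lin_D: "linear D" unfolding D_def by (intro linear_compose_add lin_l lin_r)
  have range_D: "range D = W" using range_diff[OF x0] by (simp add: D_def[abs_def])
  define K where "K = {h. D h = 0}"
  have "subspace K" unfolding K_def by (rule linear_subspace_kernel[OF lin_D])
  obtain P where P: "linear P" "\<And>v. P v \<in> K" "\<And>k. k \<in> K \<Longrightarrow> P k = k"
    using linear_projection_onto_subspace[OF \<open>subspace K\<close>] by blast
  have lin_adj: "linear (adjoint D)" by (rule adjoint_linear[OF lin_D])
  define \<phi> where "\<phi> y = P (y - x0) + adjoint D (B y y - c)" for y
  define \<phi>' where "\<phi>' y h = P h + adjoint D (B y h + B h y)" for y h
  have der: "(\<phi> has_derivative \<phi>' y) (at y)" for y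
    unfolding \<phi>_def[abs_def] \<phi>'_def[abs_def]
    by (rule quadratic_map_has_derivative[OF bil P(1) lin_adj])
  have smooth: "smooth_on UNIV \<phi>"
    unfolding \<phi>_def[abs_def] by (rule quadratic_map_smooth[OF bil P(1) lin_adj])
  have "inj (\<phi>' x0)"
    using projection_add_adjoint_comp_inj[OF lin_D P(1)] P(2,3)
    by (simp add: \<phi>'_def[abs_def] D_def[symmetric] add.commute K_def)
  then obtain U V g where UV: "open U" "x0 \<in> U" "open V" "\<phi> ` U = V"
      and inv: "\<And>x. x \<in> U \<Longrightarrow> g (\<phi> x) = x" "\<And>y. y \<in> V \<Longrightarrow> \<phi> (g y) = y"
      and "smooth_on V g"
    using smooth_inverse_function_theorem[OF smooth der] by blast
  have "\<phi> y \<in> K \<longleftrightarrow> B y y = c" for y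
  proof -
    have "D (P (y - x0)) = 0" using P(2) by (simp add: K_def)
    then have "\<phi> y \<in> K \<longleftrightarrow> D (adjoint D (B y y - c)) = 0"
      by (simp add: K_def \<phi>_def linear_add[OF lin_D])
    also have "\<dots> \<longleftrightarrow> B y y - c = 0"
    proof
      show "B y y - c = 0" if "D (adjoint D (B y y - c)) = 0"
        using in_range_kernel_adjoint_comp_eq_0[OF lin_D _ that] in_W range_D by blast
    qed (simp add: linear_0[OF lin_adj] linear_0[OF lin_D])
    finally show ?thesis by simp
  qed
  then have "\<phi> ` ({x. B x x = c} \<inter> U) = V \<inter> K"
    by (intro image_Int_eq_if_preimage UV(4)) simp
  moreover have "dim K = CARD('m) - dim W"
    using dim_range_add_dim_kernel[OF lin_D] range_D by (simp add: K_def)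
  ultimately show "\<exists>U V (\<phi>::real^'m \<Rightarrow> real^'m) \<psi> E. open U \<and> x0 \<in> U \<and> open V \<and> subspace E \<and>
      dim E = CARD('m) - dim W \<and> smooth_on U \<phi> \<and> smooth_on V \<psi> \<and> \<phi> ` U = V \<and>
      (\<forall>y\<in>U. \<psi> (\<phi> y) = y) \<and> (\<forall>z\<in>V. \<phi> (\<psi> z) = z) \<and> \<phi> ` ({x. B x x = c} \<inter> U) = V \<inter> E"
    using UV inv \<open>smooth_on V g\<close> \<open>subspace K\<close> smooth_on_subset[OF smooth subset_UNIV]
    by (intro exI[of _ U] exI[of _ V] exI[of _ \<phi>] exI[of _ g] exI[of _ K] conjI) simp_all
qed

section \<open>The t-product via block circulant matrices\<close>

lemma slice_idx_inj:
  "i < CARD('l) \<Longrightarrow> j < CARD('l) \<Longrightarrow> (slice_idx i :: 'l::enum) = slice_idx j \<Longrightarrow> i = j"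
  unfolding slice_idx_def card_UNIV_length_enum using enum_distinct nth_eq_iff_index_eq by metis

lemma ex_slice_idx_eq: "\<exists>i < CARD('l). slice_idx i = (k::'l::enum)"
proof -
  have "k \<in> set (Enum.enum :: 'l list)" using UNIV_enum by auto
  then show ?thesis unfolding slice_idx_def card_UNIV_length_enum using in_set_conv_nth by metis
qed

lemma ex1_slice_pos: "\<exists>!i. i < CARD('l) \<and> slice_idx i = (k::'l::enum)"
  using ex_slice_idx_eq slice_idx_inj by metis

lemma slice_pos_less: "slice_pos (k::'l::enum) < CARD('l)"
  unfolding slice_pos_def using theI'[OF ex1_slice_pos] by blast

lemma slice_idx_slice_pos[simp]: "slice_idx (slice_pos (k::'l::enum)) = k"
  unfolding slice_pos_def using theI'[OF ex1_slice_pos] by blast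

lemma slice_pos_slice_idx[simp]: "i < CARD('l::enum) \<Longrightarrow> slice_pos (slice_idx i :: 'l) = i"
  using slice_idx_inj slice_pos_less slice_idx_slice_pos by metis

lemma mod_less_double: "(x::nat) < 2 * L \<Longrightarrow> x mod L = (if x < L then x else x - L)"
  by (simp add: le_mod_geq)

lemma mod_sub_sub_cancel: "a < L \<Longrightarrow> b < L \<Longrightarrow> c < L \<Longrightarrow>
   ((a + L - c) mod L + L - (b + L - c) mod L) mod L = (a + L - b) mod (L::nat)"
  by (simp add: mod_less_double)

lemma mod_sub_neg: "a < L \<Longrightarrow> b < L \<Longrightarrow> (L - (a + L - b) mod L) mod L = (b + L - a) mod (L::nat)"
  by (simp add: mod_less_double) arith

lemma mod_sub_inj: "a < L \<Longrightarrow> b < L \<Longrightarrow> c < L \<Longrightarrow> (a + L - c) mod L = (b + L - c) mod L \<Longrightarrow> a = (b::nat)"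
  by (simp add: mod_less_double split: if_splits)

lemma mod_add_sub_cancel: "j < L \<Longrightarrow> c < L \<Longrightarrow> ((j + c) mod L + L - c) mod L = (j::nat)"
  by (simp add: mod_less_double)

lemma mod_sub_eq_0_iff: "a < L \<Longrightarrow> b < L \<Longrightarrow> ((a + L - b) mod L = 0) = (a = (b::nat))"
  by (simp add: mod_less_double) arith

lemma mod_neg_neg: "s < L \<Longrightarrow> (L - (L - s) mod L) mod L = (s::nat)"
  by (cases "s = 0") (simp_all add: mod_less_double)

lemma mod_neg_eq_self_iff: "s < L \<Longrightarrow> ((L - s) mod L = s) = (s = 0 \<or> 2 * s = (L::nat))"
  by (cases "s = 0") (auto simp: mod_less_double)

text \<open>bcirc is an injective map turning the t-product into the matrix product and the
  tensor transpose into the matrix transpose, so the identities of the t-algebra are inherited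
  from matrix algebra.\<close>

definition bcirc :: "('n::finite, 'p::finite, 'l::enum) tensor \<Rightarrow> real^('p \<times> 'l)^('n \<times> 'l)" where
  "bcirc A = (\<chi> x y. A $ (fst x, fst y,
     slice_idx ((slice_pos (snd x) + CARD('l) - slice_pos (snd y)) mod CARD('l))))"

lemma bcirc_nth:
  "bcirc A $ (a, k) $ (c, k') =
    A $ (a, c, slice_idx ((slice_pos k + CARD('l) - slice_pos k') mod CARD('l)))"
  for A :: "('n::finite, 'p::finite, 'l::enum) tensor"
  by (simp add: bcirc_def)

lemma bcirc_inj: "bcirc A = bcirc B \<Longrightarrow> A = B"
  for A B :: "('n::finite, 'p::finite, 'l::enum) tensor"
proof -
  assume h: "bcirc A = bcirc B"
  have "A $ (a,c,k) = B $ (a,c,k)" for a c k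
  proof -
    have "bcirc A $ (a,k) $ (c, slice_idx 0) = bcirc B $ (a,k) $ (c, slice_idx 0)" using h by simp
    then show ?thesis by (simp add: bcirc_nth slice_pos_less)
  qed
  then show "A = B" by (simp add: vec_eq_iff)
qed

lemma bcirc_tident: "bcirc (tident :: ('p::finite, 'p, 'l::enum) tensor) = mat 1"
proof -
  have e: "(slice_pos k + CARD('l) - slice_pos k') mod CARD('l) = 0 \<longleftrightarrow> k = k'" for k k' :: 'l
    using mod_sub_eq_0_iff[OF slice_pos_less[of k] slice_pos_less[of k']] slice_idx_slice_pos
    by metis
  have "bcirc (tident :: ('p, 'p, 'l) tensor) $ (a, k) $ (b, k') = mat 1 $ (a, k) $ (b, k')"
    for a b :: 'p and k k' :: 'l
    by (simp add: bcirc_nth tident_def mat_def e)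
  then show ?thesis by (simp add: vec_eq_iff)
qed

lemma bij_betw_slice_shift:
  assumes "s < CARD('l::enum)"
  shows "bij_betw (\<lambda>k::'l. (slice_pos k + CARD('l) - s) mod CARD('l)) UNIV {..<CARD('l)}"
proof (rule bij_betw_imageI)
  show "inj (\<lambda>k::'l. (slice_pos k + CARD('l) - s) mod CARD('l))"
  proof (rule injI)
    fix k1 k2 :: 'l
    assume "(slice_pos k1 + CARD('l) - s) mod CARD('l) = (slice_pos k2 + CARD('l) - s) mod CARD('l)"
    then have "slice_pos k1 = slice_pos k2"
      using mod_sub_inj[OF slice_pos_less slice_pos_less assms] by blast
    then show "k1 = k2" by (metis slice_idx_slice_pos)
  qed
  show "range (\<lambda>k::'l. (slice_pos k + CARD('l) - s) mod CARD('l)) = {..<CARD('l)}"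
  proof (intro subset_antisym subsetI)
    fix j assume "j \<in> {..<CARD('l)}"
    then have "j = (slice_pos (slice_idx ((j + s) mod CARD('l)) :: 'l) + CARD('l) - s) mod CARD('l)"
      using mod_add_sub_cancel[OF _ assms] by simp
    then show "j \<in> range (\<lambda>k::'l. (slice_pos k + CARD('l) - s) mod CARD('l))" by blast
  qed auto
qed

lemma bcirc_tprod: "bcirc (tprod A B) = bcirc A ** bcirc B"
  for A :: "('n::finite, 'p::finite, 'l::enum) tensor" and B :: "('p, 'm::finite, 'l) tensor"
proof -
  define L where "L = CARD('l)"
  define d where "d k k' = (slice_pos k + L - slice_pos k') mod L" for k k' :: 'l
  have d_less: "d k k' < L" for k k' by (simp add: d_def L_def)
  have "bcirc (tprod A B) $ (a, k) $ (b, k'') = (bcirc A ** bcirc B) $ (a, k) $ (b, k'')"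
    for a b k k''
  proof -
    define G where
      "G j = (\<Sum>c\<in>UNIV. A $ (a, c, slice_idx ((d k k'' + L - j) mod L)) * B $ (c, b, slice_idx j))"
      for j
    have "bcirc (tprod A B) $ (a, k) $ (b, k'') = (\<Sum>j<L. G j)"
      using d_less[of k k''] by (simp add: bcirc_nth tprod_def G_def d_def L_def)
    also have "\<dots> = (\<Sum>k'\<in>UNIV. G (d k' k''))"
      using sum.reindex_bij_betw[OF bij_betw_slice_shift[OF slice_pos_less[of k'']], of G]
      by (simp add: d_def L_def)
    also have "\<dots> = (\<Sum>k'\<in>UNIV. \<Sum>c\<in>UNIV. bcirc A $ (a, k) $ (c, k') * bcirc B $ (c, k') $ (b, k''))"
    proof (rule sum.cong[OF refl])
      fix k' :: 'l
      have "(d k k'' + L - d k' k'') mod L = d k k'"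
        unfolding d_def L_def by (rule mod_sub_sub_cancel) (simp_all add: slice_pos_less)
      then show "G (d k' k'') =
          (\<Sum>c\<in>UNIV. bcirc A $ (a, k) $ (c, k') * bcirc B $ (c, k') $ (b, k''))"
        by (simp add: G_def bcirc_nth d_def L_def)
    qed
    also have "\<dots> = (\<Sum>c\<in>UNIV. \<Sum>k'\<in>UNIV. bcirc A $ (a, k) $ (c, k') * bcirc B $ (c, k') $ (b, k''))"
      by (rule sum.swap)
    also have "\<dots> = (bcirc A ** bcirc B) $ (a, k) $ (b, k'')"
      by (simp add: matrix_matrix_mult_def sum.cartesian_product)
    finally show ?thesis .
  qed
  then show ?thesis by (simp add: vec_eq_iff)
qed

lemma bcirc_ttrans: "bcirc (ttrans A) = transpose (bcirc A)"
  for A :: "('n::finite, 'p::finite, 'l::enum) tensor"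
proof -
  have "bcirc (ttrans A) $ (b,k) $ (a,k') = transpose (bcirc A) $ (b,k) $ (a,k')" for a k b k'
    using mod_sub_neg[OF slice_pos_less[of k] slice_pos_less[of k']]
    by (simp add: bcirc_nth ttrans_def transpose_def)
  then show ?thesis by (simp add: vec_eq_iff)
qed

lemma tprod_assoc: "tprod (tprod A B) C = tprod A (tprod B C)"
  for A :: "('n::finite, 'p::finite, 'l::enum) tensor" and B :: "('p, 'm::finite, 'l) tensor"
  and C :: "('m, 'q::finite, 'l) tensor"
  by (rule bcirc_inj) (simp add: bcirc_tprod matrix_mul_assoc)

lemma ttrans_tprod: "ttrans (tprod A B) = tprod (ttrans B) (ttrans A)"
  for A :: "('n::finite, 'p::finite, 'l::enum) tensor" and B :: "('p, 'm::finite, 'l) tensor"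
  by (rule bcirc_inj) (simp add: bcirc_tprod bcirc_ttrans matrix_transpose_mul)

lemma ttrans_ttrans[simp]: "ttrans (ttrans A) = A"
  for A :: "('n::finite, 'p::finite, 'l::enum) tensor"
  by (rule bcirc_inj) (simp add: bcirc_ttrans)

lemma tprod_ident_left[simp]: "tprod tident A = A"
  for A :: "('n::finite, 'p::finite, 'l::enum) tensor"
  by (rule bcirc_inj) (simp add: bcirc_tprod bcirc_tident)

lemma tprod_ident_right[simp]: "tprod A tident = A"
  for A :: "('n::finite, 'p::finite, 'l::enum) tensor"
  by (rule bcirc_inj) (simp add: bcirc_tprod bcirc_tident)

lemma tprod_add_left: "tprod (A + B) C = tprod A C + tprod B C"
  for A B :: "('n::finite, 'p::finite, 'l::enum) tensor" and C :: "('p, 'm::finite, 'l) tensor"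
  by (simp add: vec_eq_iff tprod_def sum.distrib distrib_right split: prod.splits)

lemma tprod_add_right: "tprod A (B + C) = tprod A B + tprod A C"
  for A :: "('n::finite, 'p::finite, 'l::enum) tensor" and B C :: "('p, 'm::finite, 'l) tensor"
  by (simp add: vec_eq_iff tprod_def sum.distrib distrib_left split: prod.splits)

lemma tprod_scale_left: "tprod (r *\<^sub>R A) C = r *\<^sub>R tprod A C"
  for A :: "('n::finite, 'p::finite, 'l::enum) tensor" and C :: "('p, 'm::finite, 'l) tensor"
  by (simp add: vec_eq_iff tprod_def sum_distrib_left mult.assoc split: prod.splits)

lemma tprod_scale_right: "tprod A (r *\<^sub>R C) = r *\<^sub>R tprod A C"
  for A :: "('n::finite, 'p::finite, 'l::enum) tensor" and C :: "('p, 'm::finite, 'l) tensor"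
  by (simp add: vec_eq_iff tprod_def sum_distrib_left mult.left_commute split: prod.splits)

lemma ttrans_add: "ttrans (A + B) = ttrans A + ttrans B"
  for A B :: "('n::finite, 'p::finite, 'l::enum) tensor"
  by (simp add: vec_eq_iff ttrans_def split: prod.splits)

lemma ttrans_scale: "ttrans (r *\<^sub>R A) = r *\<^sub>R ttrans A"
  for A :: "('n::finite, 'p::finite, 'l::enum) tensor"
  by (simp add: vec_eq_iff ttrans_def split: prod.splits)

lemma ttrans_diff: "ttrans (A - B) = ttrans A - ttrans B"
  for A B :: "('n::finite, 'p::finite, 'l::enum) tensor"
  by (simp add: vec_eq_iff ttrans_def split: prod.splits)

lemma bilinear_ttrans_tprod:
  "bilinear (\<lambda>(x::('n::finite, 'p::finite, 'l::enum) tensor) y. tprod (ttrans x) y)"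
  unfolding bilinear_def
  by (auto intro!: linearI simp: tprod_add_left tprod_add_right tprod_scale_left tprod_scale_right
      ttrans_add ttrans_scale)

definition tsym :: "('p::finite, 'p, 'l::enum) tensor set" where
  "tsym = {C. ttrans C = C}"

lemma ttrans_tident[simp]: "ttrans tident = (tident :: ('p::finite, 'p, 'l::enum) tensor)"
  by (rule bcirc_inj) (simp add: bcirc_ttrans bcirc_tident)

lemma tprod_ttrans_self_diff_tident_in_tsym: "tprod (ttrans Y) Y - tident \<in> tsym"
  for Y :: "('n::finite, 'p::finite, 'l::enum) tensor"
  by (simp add: tsym_def ttrans_diff ttrans_tprod)

lemma range_tStiefel_differential:
  fixes X :: "('n::finite, 'p::finite, 'l::enum) tensor"
  assumes "X \<in> tStiefel"
  shows "range (\<lambda>h. tprod (ttrans h) X + tprod (ttrans X) h) = tsym"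
proof (intro subset_antisym subsetI)
  fix C :: "('p, 'p, 'l) tensor" assume "C \<in> tsym"
  then have C: "ttrans C = C" by (simp add: tsym_def)
  have X: "tprod (ttrans X) X = tident" using assms by (simp add: tStiefel_def)
  let ?h = "(1/2) *\<^sub>R tprod X C"
  have "tprod (ttrans ?h) X = (1/2) *\<^sub>R C"
    by (simp add: ttrans_scale tprod_scale_left ttrans_tprod tprod_assoc X C)
  moreover have "tprod (ttrans X) ?h = (1/2) *\<^sub>R C"
    by (simp add: tprod_scale_right tprod_assoc[symmetric] X)
  ultimately have "C = tprod (ttrans ?h) X + tprod (ttrans X) ?h"
    by (simp flip: scaleR_add_left)
  then show "C \<in> range (\<lambda>h. tprod (ttrans h) X + tprod (ttrans X) h)" by blast
qed (auto simp: tsym_def ttrans_add ttrans_tprod)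

section \<open>Dimension of the symmetric tensors\<close>

lemma dim_blockwise_constant:
  fixes \<P> :: "'i::finite set set"
  assumes "partition_on UNIV \<P>"
  shows "dim {x::real^'i. \<forall>P\<in>\<P>. \<forall>i\<in>P. \<forall>j\<in>P. x $ i = x $ j} = card \<P>"
proof -
  define S where "S = {x::real^'i. \<forall>P\<in>\<P>. \<forall>i\<in>P. \<forall>j\<in>P. x $ i = x $ j}"
  define \<beta> :: "'i set \<Rightarrow> real^'i" where "\<beta> P = (\<chi> j. if j \<in> P then 1 else 0)" for P
  have same_block: "P = Q" if "P \<in> \<P>" "Q \<in> \<P>" "j \<in> P" "j \<in> Q" for P Q j
    using partition_onD2[OF assms] that by (auto simp: disjoint_def)
  have block: "\<exists>P\<in>\<P>. j \<in> P" for j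
    using partition_onD1[OF assms] by blast
  have nonempty: "\<exists>j. j \<in> P" if "P \<in> \<P>" for P
    using partition_onD3[OF assms] that by (metis ex_in_conv)
  have \<beta>_one: "\<beta> P $ j = 1" if "j \<in> P" for P j
    using that by (simp add: \<beta>_def)
  have sub: "\<beta> ` \<P> \<subseteq> S"
    unfolding S_def \<beta>_def by (auto; metis same_block)
  have spans: "S \<subseteq> span (\<beta> ` \<P>)"
  proof
    fix x assume x: "x \<in> S"
    have "x = (\<Sum>P\<in>\<P>. x $ (SOME i. i \<in> P) *\<^sub>R \<beta> P)"
    proof (subst vec_eq_iff, intro allI)
      fix j
      obtain P0 where P0: "P0 \<in> \<P>" "j \<in> P0" using block by blast
      have "(x $ (SOME i. i \<in> P) *\<^sub>R \<beta> P) $ j = (if P = P0 then x $ (SOME i. i \<in> P0) else 0)"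
        if "P \<in> \<P>" for P
      proof (cases "P = P0")
        case False
        then have "j \<notin> P" using same_block[OF that P0(1) _ P0(2)] by blast
        then show ?thesis using False by (simp add: \<beta>_def)
      qed (simp add: \<beta>_def P0(2))
      then have "(\<Sum>P\<in>\<P>. x $ (SOME i. i \<in> P) *\<^sub>R \<beta> P) $ j =
          (\<Sum>P\<in>\<P>. if P = P0 then x $ (SOME i. i \<in> P0) else 0)"
        unfolding sum_component by (intro sum.cong) auto
      also have "\<dots> = x $ (SOME i. i \<in> P0)" using P0(1) by simp
      also have "\<dots> = x $ j"
        using x P0 someI_ex[OF nonempty[OF P0(1)]] unfolding S_def by blast
      finally show "x $ j = (\<Sum>P\<in>\<P>. x $ (SOME i. i \<in> P) *\<^sub>R \<beta> P) $ j" by simp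
    qed
    also have "\<dots> \<in> span (\<beta> ` \<P>)"
      by (intro span_sum span_scale span_base) auto
    finally show "x \<in> span (\<beta> ` \<P>)" .
  qed
  have indep: "independent (\<beta> ` \<P>)"
  proof (rule pairwise_orthogonal_independent)
    have "\<beta> P \<bullet> \<beta> Q = 0" if "P \<in> \<P>" "Q \<in> \<P>" "\<beta> P \<noteq> \<beta> Q" for P Q
    proof -
      have "\<beta> P $ j * \<beta> Q $ j = 0" for j
        using that same_block[OF that(1,2), of j] by (auto simp: \<beta>_def)
      then show ?thesis unfolding inner_vec_def by (intro sum.neutral) auto
    qed
    then show "pairwise orthogonal (\<beta> ` \<P>)"
      unfolding pairwise_def orthogonal_def by blast
    show "0 \<notin> \<beta> ` \<P>"
      using nonempty \<beta>_one by (metis imageE zero_index zero_neq_one)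
  qed
  have "inj_on \<beta> \<P>"
  proof (rule inj_onI)
    fix P Q assume "P \<in> \<P>" "Q \<in> \<P>" "\<beta> P = \<beta> Q"
    moreover obtain j where "j \<in> P" using nonempty \<open>P \<in> \<P>\<close> by blast
    ultimately have "\<beta> Q $ j = 1" using \<beta>_one by metis
    then have "j \<in> Q" by (simp add: \<beta>_def split: if_splits)
    then show "P = Q" using same_block \<open>P \<in> \<P>\<close> \<open>Q \<in> \<P>\<close> \<open>j \<in> P\<close> by blast
  qed
  then show ?thesis
    using dim_unique[OF sub spans indep] card_image unfolding S_def by simp
qed

lemma dim_fixed_by_involution:
  fixes \<tau> :: "'i::finite \<Rightarrow> 'i"
  assumes inv: "\<And>i. \<tau> (\<tau> i) = i"
  shows "2 * dim {x::real^'i. \<forall>i. x $ \<tau> i = x $ i} = CARD('i) + card {i. \<tau> i = i}"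
proof -
  define orbit where "orbit i = {i, \<tau> i}" for i
  define \<P> where "\<P> = range orbit"
  have orbit_eq: "orbit j = orbit i" if "j \<in> orbit i" for i j
    using that inv by (auto simp: orbit_def)
  have "partition_on UNIV \<P>"
  proof (rule partition_onI)
    show "disjnt p q" if "p \<in> \<P>" "q \<in> \<P>" "p \<noteq> q" for p q
      using that orbit_eq unfolding \<P>_def disjnt_def by blast
  qed (auto simp: \<P>_def orbit_def)
  moreover have "{x::real^'i. \<forall>i. x $ \<tau> i = x $ i} = {x. \<forall>P\<in>\<P>. \<forall>i\<in>P. \<forall>j\<in>P. x $ i = x $ j}"
    by (auto simp: \<P>_def orbit_def)
  ultimately have dim_eq: "dim {x::real^'i. \<forall>i. x $ \<tau> i = x $ i} = card \<P>"
    by (simp add: dim_blockwise_constant)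
  have card_orbit: "real (card (orbit i)) = (if \<tau> i = i then 1 else 2)" for i
    by (simp add: orbit_def)
  have "real (card \<P>) = (\<Sum>P\<in>\<P>. 1)" by simp
  also have "\<dots> = (\<Sum>P\<in>\<P>. \<Sum>i\<in>P. 1 / real (card (orbit i)))"
  proof (rule sum.cong[OF refl])
    fix P assume "P \<in> \<P>"
    then obtain j where P: "P = orbit j" by (auto simp: \<P>_def)
    have "(\<Sum>i\<in>P. 1 / real (card (orbit i))) = (\<Sum>i\<in>P. 1 / real (card P))"
      using P orbit_eq by (intro sum.cong) auto
    also have "\<dots> = 1" using P card_orbit[of j] by simp
    finally show "1 = (\<Sum>i\<in>P. 1 / real (card (orbit i)))" by simp
  qed
  also have "\<dots> = (\<Sum>i\<in>\<Union>\<P>. 1 / real (card (orbit i)))"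
    using partition_onD2[OF \<open>partition_on UNIV \<P>\<close>]
    by (subst sum.Union_disjoint) (auto simp: disjoint_def)
  also have "\<dots> = (\<Sum>i\<in>UNIV. if \<tau> i = i then 1 else 1 / 2)"
    using partition_onD1[OF \<open>partition_on UNIV \<P>\<close>] card_orbit by (intro sum.cong) auto
  finally have "2 * real (card \<P>) = (\<Sum>i\<in>UNIV. 2 * (if \<tau> i = i then 1 else 1 / 2))"
    by (simp add: sum_distrib_left)
  also have "\<dots> = (\<Sum>i\<in>UNIV. 1 + (if \<tau> i = i then 1 else 0))"
    by (rule sum.cong) auto
  also have "\<dots> = real (CARD('i) + card {i. \<tau> i = i})"
    by (simp add: sum.distrib sum.inter_filter[symmetric])
  finally show ?thesis using dim_eq by linarith
qed

definition slice_reflect :: "'l::enum \<Rightarrow> 'l" where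
  "slice_reflect k = slice_idx ((CARD('l) - slice_pos k) mod CARD('l))"

lemma slice_pos_slice_reflect:
  "slice_pos (slice_reflect k) = (CARD('l) - slice_pos k) mod CARD('l)" for k :: "'l::enum"
  unfolding slice_reflect_def by (rule slice_pos_slice_idx) simp

lemma slice_reflect_slice_reflect[simp]: "slice_reflect (slice_reflect k) = k" for k :: "'l::enum"
proof -
  have "slice_pos (slice_reflect (slice_reflect k)) = slice_pos k"
    unfolding slice_pos_slice_reflect using mod_neg_neg[OF slice_pos_less[of k]] by simp
  then show ?thesis by (metis slice_idx_slice_pos)
qed

lemma slice_reflect_eq_iff:
  "slice_reflect k = k \<longleftrightarrow> slice_pos k = 0 \<or> 2 * slice_pos k = CARD('l)" for k :: "'l::enum"
proof -
  have "slice_reflect k = k \<longleftrightarrow> slice_pos (slice_reflect k) = slice_pos k"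
    by (metis slice_idx_slice_pos)
  also have "\<dots> = (slice_pos k = 0 \<or> 2 * slice_pos k = CARD('l))"
    unfolding slice_pos_slice_reflect by (rule mod_neg_eq_self_iff[OF slice_pos_less])
  finally show ?thesis .
qed

lemma card_slice_reflect_fixed:
  "card {k::'l::enum. slice_reflect k = k} = (if even CARD('l) then 2 else 1)"
proof -
  let ?L = "CARD('l)"
  define F where "F = {s. s < ?L \<and> (s = 0 \<or> 2 * s = ?L)}"
  have "{k::'l. slice_reflect k = k} = slice_idx ` F"
  proof (intro subset_antisym subsetI)
    fix k :: 'l assume "k \<in> {k. slice_reflect k = k}"
    then show "k \<in> slice_idx ` F"
      using slice_reflect_eq_iff[of k] slice_pos_less[of k] unfolding F_def
      by (intro image_eqI[of k slice_idx "slice_pos k"]) auto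
  qed (auto simp: F_def slice_reflect_eq_iff)
  moreover have "inj_on (slice_idx :: nat \<Rightarrow> 'l) F"
    using slice_idx_inj unfolding F_def by (intro inj_onI) blast
  moreover have "F = (if even ?L then {0, ?L div 2} else {0})"
    using zero_less_card_finite[where 'a='l] unfolding F_def by (auto elim!: evenE; presburger)
  moreover have "?L div 2 \<noteq> 0" if "even ?L"
    using that zero_less_card_finite[where 'a='l] by presburger
  ultimately show ?thesis by (simp add: card_image)
qed

definition transpose_index :: "'p \<times> 'p \<times> 'l \<Rightarrow> 'p \<times> 'p \<times> 'l::enum" where
  "transpose_index i = (case i of (a, b, k) \<Rightarrow> (b, a, slice_reflect k))"

lemma transpose_index_involution: "transpose_index (transpose_index i) = i"
  by (cases i) (simp add: transpose_index_def)

lemma tsym_eq_fixed_by_transpose_index: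
  "(tsym :: ('p::finite, 'p, 'l::enum) tensor set) = {x. \<forall>i. x $ transpose_index i = x $ i}"
proof -
  have "ttrans C = C \<longleftrightarrow> (\<forall>i. C $ transpose_index i = C $ i)" for C :: "('p, 'p, 'l) tensor"
  proof -
    have "ttrans C = C \<longleftrightarrow> (\<forall>b a k. ttrans C $ (b, a, k) = C $ (b, a, k))"
      by (simp add: vec_eq_iff)
    also have "\<dots> \<longleftrightarrow> (\<forall>b a k. C $ transpose_index (b, a, k) = C $ (b, a, k))"
      by (simp add: ttrans_def transpose_index_def slice_reflect_def)
    also have "\<dots> \<longleftrightarrow> (\<forall>i. C $ transpose_index i = C $ i)" by auto
    finally show ?thesis .
  qed
  then show ?thesis by (auto simp: tsym_def)
qed

lemma card_transpose_index_fixed: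
  "card {i::'p::finite \<times> 'p \<times> 'l::enum. transpose_index i = i} =
    CARD('p) * (if even CARD('l) then 2 else 1)"
proof -
  have "{i::'p \<times> 'p \<times> 'l. transpose_index i = i} =
      (\<lambda>(a, k). (a, a, k)) ` (UNIV \<times> {k. slice_reflect k = k})"
    by (auto simp: transpose_index_def image_iff)
  moreover have "inj (\<lambda>(a::'p, k::'l). (a, a, k))" by (auto simp: inj_on_def)
  ultimately show ?thesis
    by (simp add: card_image inj_on_subset card_cartesian_product card_slice_reflect_fixed)
qed

lemma dim_tsym: "2 * dim (tsym :: ('p::finite, 'p, 'l::enum) tensor set) =
    CARD('p) * CARD('p) * CARD('l) + CARD('p) * (if even CARD('l) then 2 else 1)"
proof -
  have "2 * dim {x::real^('p \<times> 'p \<times> 'l). \<forall>i. x $ transpose_index i = x $ i} =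
      CARD('p \<times> 'p \<times> 'l) + card {i::'p \<times> 'p \<times> 'l. transpose_index i = i}"
    by (rule dim_fixed_by_involution) (rule transpose_index_involution)
  then show ?thesis
    unfolding tsym_eq_fixed_by_transpose_index card_transpose_index_fixed by (simp add: mult.assoc)
qed

section \<open>The t-Stiefel manifold\<close>

lemma one_div_two_powr_abs_sin_half_pi:
  "1 / 2 powr \<bar>sin (real L * pi / 2)\<bar> = (if even L then 1 else 1 / 2 :: real)"
proof (cases "even L")
  case True
  then obtain q where "real L * pi / 2 = real q * pi" by (auto elim!: evenE)
  then show ?thesis using True by simp
next
  case False
  then obtain q where "L = 2 * q + 1" by (rule oddE)
  then have "real L * pi / 2 = real q * pi + pi / 2" by (simp add: field_simps)
  then have "sin (real L * pi / 2) = sin (real q * pi + pi / 2)" by (simp only:)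
  also have "\<dots> = cos (real q * pi)" by (simp add: sin_add)
  finally have "sin (real L * pi / 2) = cos (real q * pi)" .
  then have "\<bar>sin (real L * pi / 2)\<bar> = 1" by simp
  then show ?thesis using False by simp
qed

lemma tStiefel_dimension_arith:
  fixes n p L T :: nat
  assumes "p \<le> n" "0 < L" and T: "2 * T = p * p * L + p * (if even L then 2 else 1)"
  shows "real (n * p * L - T) =
    real p * (real n * real L - real p * real L / 2 - 1 / 2 powr \<bar>sin (real L * pi / 2)\<bar>)"
proof -
  define f :: nat where "f = (if even L then 2 else 1)"
  have T_f: "2 * T = p * p * L + p * f" using T by (simp add: f_def)
  have "f \<le> L" using assms(2) by (auto simp: f_def elim!: evenE)
  then have "p * f \<le> p * L" by simp
  moreover have "p * p * L \<le> n * p * L" "p * L \<le> n * p * L"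
    using assms(1,2) by simp_all
  ultimately have "T \<le> n * p * L" using T_f by linarith
  moreover have "real T = (real p * real p * real L + real p * real f) / 2"
    using arg_cong[OF T_f, of real] by simp
  moreover have "1 / 2 powr \<bar>sin (real L * pi / 2)\<bar> = real f / 2"
    by (simp add: one_div_two_powr_abs_sin_half_pi f_def)
  ultimately show ?thesis by (simp only:) (simp add: of_nat_diff algebra_simps)
qed

theorem mainTheorem1:
  assumes "CARD('p::finite) \<le> CARD('n::finite)"
  shows "\<exists>d::nat. real d = real CARD('p) * (real CARD('n) * real CARD('l::enum)
              - real CARD('p) * real CARD('l) / 2
              - 1 / 2 powr \<bar>sin (real CARD('l) * pi / 2)\<bar>)
           \<and> embedded_submanifold (tStiefel :: ('n, 'p, 'l) tensor set) d"
proof -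
  have "embedded_submanifold (tStiefel :: ('n, 'p, 'l) tensor set)
      (CARD('n \<times> 'p \<times> 'l) - dim (tsym :: ('p, 'p, 'l) tensor set))"
    unfolding tStiefel_def
  proof (rule embedded_submanifold_quadric_level_set[OF bilinear_ttrans_tprod])
    show "tprod (ttrans y) y - tident \<in> tsym" for y :: "('n, 'p, 'l) tensor"
      by (rule tprod_ttrans_self_diff_tident_in_tsym)
    show "range (\<lambda>h. tprod (ttrans h) x + tprod (ttrans x) h) = tsym"
      if "tprod (ttrans x) x = tident" for x :: "('n, 'p, 'l) tensor"
      using range_tStiefel_differential[of x] that by (simp add: tStiefel_def)
  qed
  moreover have "real (CARD('n \<times> 'p \<times> 'l) - dim (tsym :: ('p, 'p, 'l) tensor set)) =
      real CARD('p) * (real CARD('n) * real CARD('l) - real CARD('p) * real CARD('l) / 2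
        - 1 / 2 powr \<bar>sin (real CARD('l) * pi / 2)\<bar>)"
    using tStiefel_dimension_arith[OF assms _ dim_tsym] by (simp add: mult.assoc)
  ultimately show ?thesis by blast
qed

end
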